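(* Let $X\ge 0$ be a gamble and $a>0$. (a) If $\underline{P}$ is a 2-coherent lower prevision on $\{X, I_{(X\ge a)}\}$, then $\underline{P}(X\ge a)\le \underline{P}(X)/a$. (b) If $\overline{P}$ is a 2-coherent upper prevision on $\{X, I_{(X\ge a)}\}$, then $\overline{P}(X\ge a)\le \overline{P}(X)/a$.
   Context: $\Pi$ is a partition of the sure event into pairwise disjoint non-impossible events; a gamble is a bounded map $X:\Pi\to\mathbb{R}$. $(X\ge a)$ is the event $\{\omega: X(\omega)\ge a\}$ with indicator $I_{(X\ge a)}$, and $\underline{P}(X\ge a)$ means $\underline{P}(I_{(X\ge a)})$ (similarly for $\overline{P}$). A lower prevision $\underline{P}$ on $\mathcal{D}$ is 2-coherent iff for all $X_0,X_1\in\mathcal{D}$, $s_1\ge 0$, $s_0\in\mathbb{R}$, $\sup[s_1(X_1-\underline{P}(X_1))-s_0(X_0-\underline{P}(X_0))]\ge 0$. An upper prevision $\overline{P}$ on $\mathcal{D}$ is 2-coherent iff for all $X_0,X_1\in\mathcal{D}$, $s_1\ge 0$, $s_0\in\mathbb{R}$, $\sup[s_1(\overline{P}(X_1)-X_1)-s_0(\overline{P}(X_0)-X_0)]\ge 0$. *)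

theory Defs
  imports Main "HOL-Library.Indicator_Function" Complex_Main
begin

text \<open>The partition \<Pi> is modelled as a (nonempty) type 'w of atoms.
  A gamble is a bounded real map on it.\<close>

definition gamble :: "('w \<Rightarrow> real) \<Rightarrow> bool" where
  "gamble X \<longleftrightarrow> (\<exists>B. \<forall>w. \<bar>X w\<bar> \<le> B)"

definition lower_2coherent :: "('w \<Rightarrow> real) set \<Rightarrow> (('w \<Rightarrow> real) \<Rightarrow> real) \<Rightarrow> bool" where
  "lower_2coherent D P \<longleftrightarrow>
     (\<forall>X0\<in>D. \<forall>X1\<in>D. \<forall>s1::real. \<forall>s0::real. s1 \<ge> 0 \<longrightarrow>
        (SUP w. s1 * (X1 w - P X1) - s0 * (X0 w - P X0)) \<ge> 0)"

definition upper_2coherent :: "('w \<Rightarrow> real) set \<Rightarrow> (('w \<Rightarrow> real) \<Rightarrow> real) \<Rightarrow> bool" where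
  "upper_2coherent D P \<longleftrightarrow>
     (\<forall>X0\<in>D. \<forall>X1\<in>D. \<forall>s1::real. \<forall>s0::real. s1 \<ge> 0 \<longrightarrow>
        (SUP w. s1 * (P X1 - X1 w) - s0 * (P X0 - X0 w)) \<ge> 0)"

end

theory Submission
  imports Defs
begin

text \<open>Markov's inequality only needs the pointwise bound \<open>a \<cdot> I(X \<ge> a) \<le> X\<close> and the
  monotonicity that 2-coherence already gives: a gain \<open>s Y - t X\<close> that is nowhere positive
  forces \<open>s P(Y) \<le> t P(X)\<close>, since otherwise the corresponding 2-gamble would be a sure loss.\<close>

lemma lower_2coherent_scaled_mono:
  assumes "lower_2coherent D P" and "X \<in> D" and "Y \<in> D" and "s \<ge> 0"
    and "\<forall>w. s * Y w \<le> t * X w"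
  shows "s * P Y \<le> t * P X"
proof -
  have "0 \<le> (SUP w. s * (Y w - P Y) - t * (X w - P X))"
    using assms(1-4) unfolding lower_2coherent_def by blast
  also have "\<dots> \<le> t * P X - s * P Y"
    by (rule cSUP_least) (use assms(5) in \<open>auto simp: algebra_simps\<close>)
  finally show ?thesis by simp
qed

lemma upper_2coherent_scaled_mono:
  assumes "upper_2coherent D P" and "X \<in> D" and "Y \<in> D" and "t \<ge> 0"
    and "\<forall>w. s * Y w \<le> t * X w"
  shows "s * P Y \<le> t * P X"
proof -
  have "0 \<le> (SUP w. t * (P X - X w) - s * (P Y - Y w))"
    using assms(1-4) unfolding upper_2coherent_def by blast
  also have "\<dots> \<le> t * P X - s * P Y"
    by (rule cSUP_least) (use assms(5) in \<open>auto simp: algebra_simps\<close>)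
  finally show ?thesis by simp
qed

lemma mult_indicator_ge_le:
  fixes X :: "'w \<Rightarrow> real"
  assumes "X w \<ge> 0"
  shows "a * indicator {w. X w \<ge> a} w \<le> X w"
  using assms by (simp add: indicator_def)

theorem proposition2:
  fixes X :: "'w \<Rightarrow> real" and a :: real
    and LP UP :: "('w \<Rightarrow> real) \<Rightarrow> real"
  assumes "gamble X" and "\<forall>w. X w \<ge> 0" and "a > 0"
  shows "(lower_2coherent {X, indicator {w. X w \<ge> a}} LP \<longrightarrow>
            LP (indicator {w. X w \<ge> a}) \<le> LP X / a)
       \<and> (upper_2coherent {X, indicator {w. X w \<ge> a}} UP \<longrightarrow>
            UP (indicator {w. X w \<ge> a}) \<le> UP X / a)"
proof -
  let ?I = "indicator {w. X w \<ge> a} :: 'w \<Rightarrow> real"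
  have markov: "\<forall>w. a * ?I w \<le> 1 * X w"
    using assms(2) by (simp add: mult_indicator_ge_le)
  show ?thesis
  proof (intro conjI impI)
    assume "lower_2coherent {X, ?I} LP"
    then have "a * LP ?I \<le> 1 * LP X"
      by (rule lower_2coherent_scaled_mono) (use markov assms(3) in auto)
    then show "LP ?I \<le> LP X / a" using assms(3) by (simp add: field_simps)
  next
    assume "upper_2coherent {X, ?I} UP"
    then have "a * UP ?I \<le> 1 * UP X"
      by (rule upper_2coherent_scaled_mono) (use markov in auto)
    then show "UP ?I \<le> UP X / a" using assms(3) by (simp add: field_simps)
  qed
qed

end
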